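(* Let $f$ be a stable update function. Suppose the configuration $\mathcal U^{(t)}=(\vec u_1^{(t)},\dots,\vec u_n^{(t)})$ is strictly convex with coefficients $b_1,\dots,b_n\in\{-1,1\}$, i.e. $\langle b_i\vec u_i^{(t)},b_j\vec u_j^{(t)}\rangle>0$ for all $i,j\in[n]$, and let $\mathcal U^{(t+1)}$ be obtained from $\mathcal U^{(t)}$ by a single interaction. Then $\langle b_i\vec u_i^{(t+1)},b_j\vec u_j^{(t+1)}\rangle>0$ for all $i,j\in[n]$; in particular $\mathcal U^{(t+1)}$ is strictly convex with the same coefficients.
   Context: Opinions are unit vectors in $\mathbb R^d$; a configuration is an $n$-tuple, $A_{ij}=\langle\vec u_i,\vec u_j\rangle$. An interaction $(i,j)$, $i\ne j$, replaces $\vec u_i$ by $\vec w/\|\vec w\|$ with $\vec w=\vec u_i+f(A_{ij})\vec u_j$, leaving other opinions unchanged. $f:[-1,1]\to\mathbb R$ is stable if continuous and $\operatorname{sign}f(A)=\operatorname{sign}A$ for all $A$. A configuration is strictly convex if there exist $b_1,\dots,b_n\in\{\pm1\}$ with $\langle b_i\vec u_i,b_j\vec u_j\rangle>0$ for all $i,j$. *)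

theory Defs
  imports "HOL-Analysis.Analysis"
begin

text \<open>Opinions are vectors in a Euclidean space 'a (playing the role of R^d);
a configuration of n opinions is a function u :: nat => 'a, relevant on indices i < n.\<close>

definition unit_config :: "nat \<Rightarrow> (nat \<Rightarrow> 'a::euclidean_space) \<Rightarrow> bool" where
  "unit_config n u \<longleftrightarrow> (\<forall>i<n. norm (u i) = 1)"

definition stable :: "(real \<Rightarrow> real) \<Rightarrow> bool" where
  "stable f \<longleftrightarrow> continuous_on {-1..1} f \<and> (\<forall>A\<in>{-1..1}. sgn (f A) = sgn A)"

definition interact :: "(real \<Rightarrow> real) \<Rightarrow> (nat \<Rightarrow> 'a::euclidean_space) \<Rightarrow> nat \<Rightarrow> nat \<Rightarrow> (nat \<Rightarrow> 'a)" where
  "interact f u i j = (let w = u i + f (u i \<bullet> u j) *\<^sub>R u j in u(i := (1 / norm w) *\<^sub>R w))"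

definition strictly_convex_with :: "nat \<Rightarrow> (nat \<Rightarrow> 'a::euclidean_space) \<Rightarrow> (nat \<Rightarrow> real) \<Rightarrow> bool" where
  "strictly_convex_with n u b \<longleftrightarrow>
     (\<forall>i<n. b i \<in> {-1, 1}) \<and> (\<forall>i<n. \<forall>j<n. (b i *\<^sub>R u i) \<bullet> (b j *\<^sub>R u j) > 0)"

definition strictly_convex :: "nat \<Rightarrow> (nat \<Rightarrow> 'a::euclidean_space) \<Rightarrow> bool" where
  "strictly_convex n u \<longleftrightarrow> (\<exists>b. strictly_convex_with n u b)"

end

theory Submission
  imports Defs
begin

text \<open>Write \<open>v\<^sub>k = b\<^sub>k u\<^sub>k\<close>. Since \<open>b\<^sub>j\<^sup>2 = 1\<close>, the interaction \<open>(i,j)\<close> replaces \<open>v\<^sub>i\<close> by a positive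
  multiple of \<open>v\<^sub>i + c v\<^sub>j\<close> with \<open>c = b\<^sub>i b\<^sub>j f(\<langle>u\<^sub>i,u\<^sub>j\<rangle>)\<close>, and stability makes \<open>c\<close> share the sign of
  \<open>\<langle>v\<^sub>i,v\<^sub>j\<rangle> > 0\<close>. A positive combination of \<open>v\<^sub>i\<close> and \<open>v\<^sub>j\<close> has positive inner product with every
  \<open>v\<^sub>k\<close>, so the new family is still pairwise positively correlated.\<close>

definition pairwise_positive :: "nat \<Rightarrow> (nat \<Rightarrow> 'a::real_inner) \<Rightarrow> bool" where
  "pairwise_positive n v \<longleftrightarrow> (\<forall>k<n. \<forall>l<n. v k \<bullet> v l > 0)"

lemma pairwise_positive_fun_upd:
  assumes "pairwise_positive n v" and "x \<noteq> 0" and "\<And>k. k < n \<Longrightarrow> x \<bullet> v k > 0"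
  shows "pairwise_positive n (v(i := x))"
  using assms unfolding pairwise_positive_def by (auto simp: inner_commute)

lemma stable_mult_pos:
  assumes "stable f" and "\<bar>A\<bar> \<le> 1" and "s * A > 0"
  shows "s * f A > 0"
proof -
  have "sgn (f A) = sgn A"
    using assms(1,2) unfolding stable_def by (auto simp: abs_le_iff)
  then show ?thesis
    using assms(3) by (auto simp: sgn_if zero_less_mult_iff split: if_splits)
qed

lemma signed_interaction_vector:
  assumes "b j \<in> {-1, 1}"
  shows "b i *\<^sub>R (u i + f (u i \<bullet> u j) *\<^sub>R u j)
           = b i *\<^sub>R u i + (b i * b j * f (u i \<bullet> u j)) *\<^sub>R (b j *\<^sub>R u j)"
proof -
  have "b j * b j = 1" using assms by auto
  then show ?thesis
    by (simp add: scaleR_add_right mult.assoc)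
qed

lemma interact_preserves_pairwise_positive:
  fixes u :: "nat \<Rightarrow> 'a::euclidean_space"
  assumes "stable f" and "unit_config n u" and "b j \<in> {-1, 1}"
    and "pairwise_positive n (\<lambda>k. b k *\<^sub>R u k)" and "i < n" and "j < n"
  shows "pairwise_positive n (\<lambda>k. b k *\<^sub>R interact f u i j k)"
proof -
  define v where "v k = b k *\<^sub>R u k" for k
  define w where "w = u i + f (u i \<bullet> u j) *\<^sub>R u j"
  define c where "c = b i * b j * f (u i \<bullet> u j)"
  define y where "y = (1 / norm w) *\<^sub>R (b i *\<^sub>R w)"
  have pos: "v k \<bullet> v l > 0" if "k < n" "l < n" for k l
    using assms(4) that unfolding pairwise_positive_def v_def by blast
  have "\<bar>u i \<bullet> u j\<bar> \<le> 1"
    using Cauchy_Schwarz_ineq2[of "u i" "u j"] assms(2,5,6) unfolding unit_config_def by auto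
  moreover have "(b i * b j) * (u i \<bullet> u j) > 0"
    using pos[OF assms(5,6)] unfolding v_def by (simp add: algebra_simps)
  ultimately have "c > 0"
    using stable_mult_pos[OF assms(1), of "u i \<bullet> u j" "b i * b j"] unfolding c_def by simp
  have bw: "b i *\<^sub>R w = v i + c *\<^sub>R v j"
    using signed_interaction_vector[of b j i u f, OF assms(3)] unfolding w_def c_def v_def .
  have w_pos: "(b i *\<^sub>R w) \<bullet> v k > 0" if "k < n" for k
    using pos[OF assms(5) that] pos[OF assms(6) that] \<open>c > 0\<close>
    unfolding bw by (simp add: inner_add_left add_pos_pos)
  then have "w \<noteq> 0"
    using assms(5) by fastforce
  then have y_pos: "y \<bullet> v k > 0" if "k < n" for k
    using w_pos[OF that] unfolding y_def by simp
  have "y \<noteq> 0"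
    using y_pos[OF assms(5)] by auto
  moreover have "(\<lambda>k. b k *\<^sub>R interact f u i j k) = v(i := y)"
    unfolding v_def y_def w_def interact_def Let_def by auto
  ultimately show ?thesis
    using pairwise_positive_fun_upd[of n v y i] assms(4) y_pos unfolding v_def by simp
qed

theorem mainTheorem16:
  fixes f :: "real \<Rightarrow> real" and u :: "nat \<Rightarrow> 'a::euclidean_space" and b :: "nat \<Rightarrow> real"
    and n i j :: nat
  assumes "stable f"
    and "unit_config n u"
    and "\<forall>k<n. b k \<in> {-1, 1}"
    and "\<forall>k<n. \<forall>l<n. (b k *\<^sub>R u k) \<bullet> (b l *\<^sub>R u l) > 0"
    and "i < n" and "j < n" and "i \<noteq> j"
  shows "(\<forall>k<n. \<forall>l<n. (b k *\<^sub>R interact f u i j k) \<bullet> (b l *\<^sub>R interact f u i j l) > 0)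
         \<and> strictly_convex_with n (interact f u i j) b"
proof -
  have "pairwise_positive n (\<lambda>k. b k *\<^sub>R interact f u i j k)"
    using interact_preserves_pairwise_positive[OF assms(1,2)] assms(3-6)
    unfolding pairwise_positive_def by blast
  then show ?thesis
    using assms(3) unfolding pairwise_positive_def strictly_convex_with_def by blast
qed

end
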